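(* Let $p\ge4$ be an even integer. If $G$ is a nonempty graph on $v$ vertices with $e$ edges containing no circuit of length $p$, then $$e\le 18\pi^2p^2\,v^{1+2/p}.$$ If moreover $G$ is bipartite with vertex classes of sizes $m$ and $n$, then $$e\le 9\pi^2p^2\min(m,n)^{2/p}\max(m,n).$$
   Context: Graphs are finite simple graphs. A circuit of length $p$ in a graph is a sequence $(v_1,\dots,v_p)$ of vertices such that $\{v_1,v_2\},\dots,\{v_{p-1},v_p\},\{v_p,v_1\}$ are pairwise distinct edges of the graph (the vertices need not be pairwise distinct). *)

theory Defs
  imports Complex_Main
begin

definition simple_graph :: "'a set \<Rightarrow> 'a set set \<Rightarrow> bool" where
  "simple_graph V E \<longleftrightarrow> finite V \<and> (\<forall>e\<in>E. e \<subseteq> V \<and> card e = 2)"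

definition is_circuit :: "'a set set \<Rightarrow> nat \<Rightarrow> (nat \<Rightarrow> 'a) \<Rightarrow> bool" where
  "is_circuit E p c \<longleftrightarrow>
     (\<forall>i<p. {c i, c (Suc i mod p)} \<in> E) \<and>
     inj_on (\<lambda>i. {c i, c (Suc i mod p)}) {0..<p}"

definition has_circuit_of_length :: "'a set set \<Rightarrow> nat \<Rightarrow> bool" where
  "has_circuit_of_length E p \<longleftrightarrow> (\<exists>c. is_circuit E p c)"

definition bipartition :: "'a set \<Rightarrow> 'a set set \<Rightarrow> 'a set \<Rightarrow> 'a set \<Rightarrow> bool" where
  "bipartition V E A B \<longleftrightarrow> A \<union> B = V \<and> A \<inter> B = {} \<and>
     (\<forall>e\<in>E. \<exists>a\<in>A. \<exists>b\<in>B. e = {a, b})"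

end

theory Submission
  imports Defs
begin

text \<open>The bipartite bound carries the argument; a general graph is reduced to it through a cut
  containing half of its edges. If a bipartite graph with sides \<open>X\<close>, \<open>Y\<close> and no circuit of
  length \<open>2 k\<close> had more than \<open>(2 k - 1) (|X| powr (1 / k) + 3) |V|\<close> edges, it would contain a
  subgraph of minimum degree \<open>d\<close> exceeding that factor. Run a breadth-first search in it from a
  root chosen so that layer \<open>k\<close> lies in \<open>X\<close>. Two consecutive layers below \<open>k\<close> span at most
  \<open>2 k - 1\<close> times as many edges as they have vertices: otherwise they contain a subgraph of
  minimum degree \<open>2 k\<close>, in which, following Bondy and Simonovits, a long path and two paths of
  the search tree close a circuit of length \<open>2 k\<close>. Hence the layer sizes grow at least like
  \<open>(d / (2 k - 1) - 3) ^ i\<close>, and \<open>|layer k| \<le> |X|\<close> bounds \<open>d\<close>.\<close>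

section \<open>Degrees, paths and circuits\<close>

definition nbrs :: "'a set set \<Rightarrow> 'a set \<Rightarrow> 'a \<Rightarrow> 'a set" where
  "nbrs F W x = {w\<in>W. {x, w} \<in> F}"

definition edges_in :: "'a set set \<Rightarrow> 'a set \<Rightarrow> 'a set set" where
  "edges_in F W = {e\<in>F. e \<subseteq> W}"

lemma finite_nbrs: "finite W \<Longrightarrow> finite (nbrs F W x)"
  unfolding nbrs_def by simp

lemma finite_edges_in: "finite W \<Longrightarrow> finite (edges_in F W)"
  unfolding edges_in_def by (rule finite_subset[of _ "Pow W"]) auto

lemma card_edge_if_between:
  assumes "\<forall>e\<in>E. \<exists>x\<in>X. \<exists>y\<in>Y. e = {x, y}" "X \<inter> Y = {}"
  shows "\<forall>e\<in>E. card e = 2"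
proof
  fix e assume "e \<in> E"
  then obtain x y where "x \<in> X" "y \<in> Y" "e = {x, y}" using assms(1) by blast
  moreover from this(1,2) assms(2) have "x \<noteq> y" by blast
  ultimately show "card e = 2" by simp
qed

lemma card_incident_edges_le_degree:
  assumes "finite W" "\<forall>e\<in>F. card e = 2"
  shows "card {e\<in>edges_in F W. x \<in> e} \<le> card (nbrs F W x)"
proof -
  have "{e\<in>edges_in F W. x \<in> e} \<subseteq> (\<lambda>w. {x, w}) ` nbrs F W x"
  proof
    fix e assume e: "e \<in> {e\<in>edges_in F W. x \<in> e}"
    then obtain a b where "e = {a, b}" "a \<noteq> b"
      using assms(2) by (auto simp: edges_in_def card_2_iff)
    with e obtain w where "e = {x, w}" by auto
    with e show "e \<in> (\<lambda>w. {x, w}) ` nbrs F W x" by (auto simp: edges_in_def nbrs_def)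
  qed
  then have "card {e\<in>edges_in F W. x \<in> e} \<le> card ((\<lambda>w. {x, w}) ` nbrs F W x)"
    using assms(1) by (intro card_mono) (auto simp: finite_nbrs)
  also have "\<dots> \<le> card (nbrs F W x)" by (rule card_image_le) (simp add: assms(1) finite_nbrs)
  finally show ?thesis .
qed

text \<open>Deleting a vertex of degree less than \<open>d\<close> loses at most \<open>d - 1\<close> edges, so the
  inequality survives; the deletion process must stop at a nonempty set.\<close>
lemma exists_min_degree_subgraph:
  assumes "finite W" "\<forall>e\<in>F. card e = 2" "(d - 1) * card W < card (edges_in F W)"
  obtains W' where "W' \<subseteq> W" "W' \<noteq> {}" "\<forall>x\<in>W'. d \<le> card (nbrs F W' x)"
proof -
  have "\<exists>W'\<subseteq>W. W' \<noteq> {} \<and> (\<forall>x\<in>W'. d \<le> card (nbrs F W' x))"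
    using assms(1,3)
  proof (induction W rule: finite_psubset_induct)
    case (psubset W)
    show ?case
    proof (cases "\<forall>x\<in>W. d \<le> card (nbrs F W x)")
      case True
      have "W \<noteq> {}"
      proof
        assume "W = {}"
        then have "edges_in F W = {}" using assms(2) by (auto simp: edges_in_def)
        with psubset.prems show False by simp
      qed
      with True show ?thesis by blast
    next
      case False
      then obtain x where x: "x \<in> W" "card (nbrs F W x) < d" by (auto simp: not_le)
      have incident: "card {e\<in>edges_in F W. x \<in> e} \<le> d - 1"
        using card_incident_edges_le_degree[OF psubset.hyps(1) assms(2), of x] x(2) by linarith
      have "edges_in F (W - {x}) = edges_in F W - {e\<in>edges_in F W. x \<in> e}"
        unfolding edges_in_def by auto
      then have "card (edges_in F (W - {x})) = card (edges_in F W) - card {e\<in>edges_in F W. x \<in> e}"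
        using finite_edges_in[OF psubset.hyps(1)] by (simp add: card_Diff_subset)
      moreover have "card W = Suc (card (W - {x}))"
        using card_Suc_Diff1[OF psubset.hyps(1) x(1)] by simp
      ultimately have "(d - 1) * card (W - {x}) < card (edges_in F (W - {x}))"
        using psubset.prems incident by (simp add: algebra_simps)
      moreover have "W - {x} \<subset> W" using x(1) by auto
      ultimately obtain W' where "W' \<subseteq> W - {x}" "W' \<noteq> {}" "\<forall>y\<in>W'. d \<le> card (nbrs F W' y)"
        using psubset.IH by meson
      then show ?thesis by blast
    qed
  qed
  with that show ?thesis by blast
qed

lemma exists_path_avoiding:
  assumes "finite W" "\<forall>e\<in>F. card e = 2" "\<forall>x\<in>W. D \<le> card (nbrs F W x)"
    and "y \<in> W - Z" "finite Z" "n + card Z \<le> D"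
  obtains ps where "length ps = Suc n" "last ps = y" "distinct ps" "set ps \<subseteq> W - Z"
    "successively (\<lambda>u w. {u, w} \<in> F) ps"
proof -
  have "\<exists>ps. length ps = Suc n \<and> last ps = y \<and> distinct ps \<and> set ps \<subseteq> W - Z
      \<and> successively (\<lambda>u w. {u, w} \<in> F) ps"
    using assms(6)
  proof (induction n)
    case 0
    then show ?case using assms(4) by (intro exI[of _ "[y]"]) auto
  next
    case (Suc n)
    then obtain ps where ps: "length ps = Suc n" "last ps = y" "distinct ps" "set ps \<subseteq> W - Z"
      "successively (\<lambda>u w. {u, w} \<in> F) ps" by auto
    obtain x ps' where x: "ps = x # ps'" using ps(1) by (cases ps) auto
    have "card (set ps' \<union> Z) < card (nbrs F W x)"
    proof -
      have "card (set ps' \<union> Z) \<le> n + card Z"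
        using card_Un_le[of "set ps'" Z] card_length[of ps'] ps(1) x by simp
      moreover have "D \<le> card (nbrs F W x)" using assms(3) ps(4) x by auto
      ultimately show ?thesis using Suc.prems by linarith
    qed
    then have "\<not> nbrs F W x \<subseteq> set ps' \<union> Z"
      using card_mono[of "set ps' \<union> Z" "nbrs F W x"] assms(5) by auto
    then obtain w where w: "w \<in> nbrs F W x" "w \<notin> set ps'" "w \<notin> Z" by blast
    have "w \<noteq> x"
      using w(1) assms(2) by (auto simp: nbrs_def)
    then have "w \<notin> set ps" "{w, x} \<in> F" "w \<in> W"
      using w x by (auto simp: nbrs_def insert_commute)
    with w ps x show ?case
      by (intro exI[of _ "w # ps"]) auto
  qed
  with that show ?thesis by blast
qed

lemma card_Sigma_nbrs_le_edges_in:
  assumes "finite (A \<union> B)" "A \<inter> B = {}"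
  shows "card (Sigma A (nbrs F B)) \<le> card (edges_in F (A \<union> B))"
proof (rule card_inj_on_le[of "\<lambda>(x, w). {x, w}"])
  show "inj_on (\<lambda>(x, w). {x, w}) (Sigma A (nbrs F B))"
    using assms(2) by (auto simp: inj_on_def nbrs_def doubleton_eq_iff)
  show "(\<lambda>(x, w). {x, w}) ` Sigma A (nbrs F B) \<subseteq> edges_in F (A \<union> B)"
    by (auto simp: nbrs_def edges_in_def)
  show "finite (edges_in F (A \<union> B))" using assms(1) by (rule finite_edges_in)
qed

lemma has_circuit_of_length_mono:
  "has_circuit_of_length F p \<Longrightarrow> F \<subseteq> E \<Longrightarrow> has_circuit_of_length E p"
  unfolding has_circuit_of_length_def is_circuit_def by blast

lemma has_circuit_of_length_if_cycle:
  assumes "distinct cs" "3 \<le> length cs" "successively (\<lambda>u w. {u, w} \<in> F) cs"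
    and "{last cs, hd cs} \<in> F"
  shows "has_circuit_of_length F (length cs)"
proof -
  let ?p = "length cs"
  have ne: "cs \<noteq> []" using assms(2) by auto
  have edge: "{cs ! j, cs ! (Suc j mod ?p)} \<in> F" if "j < ?p" for j
  proof (cases "Suc j < ?p")
    case True
    then show ?thesis using successively_nth[OF assms(3) True] by simp
  next
    case False
    with that have "Suc j = ?p" by simp
    then have "j = ?p - 1" "Suc j mod ?p = 0" by simp_all
    with ne assms(4) show ?thesis by (simp add: last_conv_nth hd_conv_nth)
  qed
  have "inj_on (\<lambda>j. {cs ! j, cs ! (Suc j mod ?p)}) {0..<?p}"
  proof (rule inj_onI, rule ccontr)
    fix j j' assume j: "j \<in> {0..<?p}" "j' \<in> {0..<?p}" and "j \<noteq> j'"
      and eq: "{cs ! j, cs ! (Suc j mod ?p)} = {cs ! j', cs ! (Suc j' mod ?p)}"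
    have "cs ! j \<noteq> cs ! j'" using assms(1) j \<open>j \<noteq> j'\<close> by (simp add: nth_eq_iff_index_eq)
    with eq have "cs ! j = cs ! (Suc j' mod ?p)" "cs ! (Suc j mod ?p) = cs ! j'"
      by (auto simp: doubleton_eq_iff)
    moreover have "Suc j mod ?p < ?p" "Suc j' mod ?p < ?p" using ne by simp_all
    ultimately have "j = Suc j' mod ?p" "Suc j mod ?p = j'"
      using assms(1) j by (simp_all add: nth_eq_iff_index_eq)
    with j assms(2) show False by (auto simp: mod_Suc split: if_splits)
  qed
  with edge show ?thesis unfolding has_circuit_of_length_def is_circuit_def by blast
qed

lemma has_circuit_of_length_join:
  assumes "distinct T" "distinct ps" "set T \<inter> set ps = {hd ps}" "last T = hd ps"
    and "successively (\<lambda>u w. {u, w} \<in> F) T" "successively (\<lambda>u w. {u, w} \<in> F) ps"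
    and "{last ps, hd T} \<in> F" "3 \<le> length T + length ps - 1"
  shows "has_circuit_of_length F (length T + length ps - 1)"
proof -
  have "ps \<noteq> []" "T \<noteq> []" using assms(3) by auto
  then obtain q ps' where ps: "ps = q # ps'" by (cases ps) auto
  have "distinct (T @ ps')" using assms(1-3) ps by auto
  moreover have "successively (\<lambda>u w. {u, w} \<in> F) (T @ ps')"
    using assms(4-6) ps by (cases ps') (auto simp: successively_append_iff)
  moreover have "{last (T @ ps'), hd (T @ ps')} \<in> F"
    using assms(4,7) \<open>T \<noteq> []\<close> ps by (cases "ps' = []") auto
  ultimately show ?thesis
    using has_circuit_of_length_if_cycle[of "T @ ps'"] assms(8) ps by simp
qed

lemma successively_backward_invariant:
  assumes "successively R xs" "xs \<noteq> []" "set xs \<subseteq> S" "P (last xs)"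
    and "\<And>x y. x \<in> S \<Longrightarrow> y \<in> S \<Longrightarrow> R x y \<Longrightarrow> P y \<Longrightarrow> P x"
  shows "P (hd xs)"
  using assms(1-4)
proof (induction xs)
  case (Cons x xs)
  show ?case
  proof (cases xs)
    case (Cons y ys)
    with Cons.prems have "P (hd xs)" by (intro Cons.IH) (auto simp: successively_Cons)
    with Cons.prems \<open>xs = y # ys\<close> have "P x" by (intro assms(5)[of x y]) auto
    then show ?thesis by simp
  qed (use Cons.prems in simp)
qed simp

section \<open>Cuts\<close>

definition cut_edges :: "'a set set \<Rightarrow> 'a set \<Rightarrow> 'a set set" where
  "cut_edges E A = {e\<in>E. card (e \<inter> A) = 1}"

lemma cut_edges_subset: "cut_edges E A \<subseteq> E"
  unfolding cut_edges_def by blast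

lemma cut_edge_between:
  assumes "e \<in> cut_edges E A" "e \<subseteq> V" "card e = 2"
  shows "\<exists>x\<in>A. \<exists>y\<in>V - A. e = {x, y}"
proof -
  obtain a b where ab: "e = {a, b}" "a \<noteq> b" using assms(3) by (auto simp: card_2_iff)
  have "card (e \<inter> A) = 1" using assms(1) by (simp add: cut_edges_def)
  with ab have "(a \<in> A \<and> b \<notin> A) \<or> (b \<in> A \<and> a \<notin> A)"
    by (cases "a \<in> A"; cases "b \<in> A") auto
  with ab assms(2) show ?thesis by (auto simp: insert_commute)
qed

lemma card_cut_edges_Un:
  assumes "finite E1" "finite E2" "E1 \<inter> E2 = {}"
  shows "card (cut_edges (E1 \<union> E2) A) = card (cut_edges E1 A) + card (cut_edges E2 A)"
proof -
  have "cut_edges (E1 \<union> E2) A = cut_edges E1 A \<union> cut_edges E2 A" by (auto simp: cut_edges_def)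
  with assms show ?thesis by (simp add: card_Un_disjoint cut_edges_def disjoint_iff)
qed

text \<open>Adding a new vertex \<open>v\<close> to \<open>A\<close> or not: each edge at \<open>v\<close> is cut by exactly one of the two
  choices, so the better choice cuts at least half of them.\<close>
lemma exists_cut_with_half_of_edges:
  assumes "finite V" "\<forall>e\<in>E. e \<subseteq> V \<and> card e = 2"
  shows "\<exists>A\<subseteq>V. card E \<le> 2 * card (cut_edges E A)"
  using assms
proof (induction V arbitrary: E rule: finite_induct)
  case empty
  then have "E = {}" by force
  then show ?case by simp
next
  case (insert v V)
  define E1 where "E1 = {e\<in>E. v \<notin> e}"
  define E2 where "E2 = {e\<in>E. v \<in> e}"
  have "E \<subseteq> Pow (insert v V)" using insert.prems by auto
  then have "finite E" using insert.hyps(1) by (simp add: finite_subset)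
  then have fin: "finite E1" "finite E2" by (simp_all add: E1_def E2_def)
  have E: "E = E1 \<union> E2" "E1 \<inter> E2 = {}" by (auto simp: E1_def E2_def)
  have "\<forall>e\<in>E1. e \<subseteq> V \<and> card e = 2" using insert.prems by (auto simp: E1_def)
  then obtain A where A: "A \<subseteq> V" "card E1 \<le> 2 * card (cut_edges E1 A)"
    using insert.IH[of E1] by blast
  have "cut_edges E1 (insert v A) = cut_edges E1 A"
    unfolding cut_edges_def E1_def by auto
  have "E2 \<subseteq> cut_edges E2 A \<union> cut_edges E2 (insert v A)"
  proof
    fix e assume e: "e \<in> E2"
    then obtain a b where "e = {a, b}" "a \<noteq> b" "v \<in> {a, b}"
      using insert.prems by (auto simp: E2_def card_2_iff)
    then obtain w where w: "e = {v, w}" "w \<noteq> v" by blast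
    have "v \<notin> A" using A(1) insert.hyps(2) by blast
    with e w show "e \<in> cut_edges E2 A \<union> cut_edges E2 (insert v A)"
      by (cases "w \<in> A") (auto simp: cut_edges_def Int_insert_left)
  qed
  then have "card E2 \<le> card (cut_edges E2 A) + card (cut_edges E2 (insert v A))"
    using fin(2) card_Un_le[of "cut_edges E2 A" "cut_edges E2 (insert v A)"]
      card_mono[of "cut_edges E2 A \<union> cut_edges E2 (insert v A)" E2]
    by (auto simp: cut_edges_def)
  then have "card E \<le> 2 * card (cut_edges E A) \<or> card E \<le> 2 * card (cut_edges E (insert v A))"
    using A(2) \<open>cut_edges E1 (insert v A) = _\<close> card_cut_edges_Un[OF fin E(2)]
      card_Un_disjoint[OF fin E(2)] E(1) by auto
  with A(1) show ?case by blast
qed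

section \<open>Breadth-first search layers\<close>

locale bfs =
  fixes F :: "'a set set" and W :: "'a set" and r :: 'a
  assumes finite_W: "finite W" and root_in_W: "r \<in> W"
begin

primrec ball :: "nat \<Rightarrow> 'a set" where
  "ball 0 = {r}"
| "ball (Suc i) = ball i \<union> {w\<in>W. \<exists>x\<in>ball i. {x, w} \<in> F}"

definition layer :: "nat \<Rightarrow> 'a set" where
  "layer i = {x\<in>ball i. \<forall>j<i. x \<notin> ball j}"

lemma ball_subset_W: "ball i \<subseteq> W"
  by (induction i) (auto simp: root_in_W)

lemma layer_subset_W: "layer i \<subseteq> W"
  using ball_subset_W by (auto simp: layer_def)

lemma finite_layer: "finite (layer i)"
  using layer_subset_W finite_W by (rule finite_subset)

lemma layer_0: "layer 0 = {r}"
  by (simp add: layer_def)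

lemma layer_unique: "x \<in> layer i \<Longrightarrow> x \<in> layer j \<Longrightarrow> i = j"
  unfolding layer_def by (cases i j rule: linorder_cases) auto

lemma layer_disjoint: "i \<noteq> j \<Longrightarrow> layer i \<inter> layer j = {}"
  using layer_unique by blast

lemma ball_imp_layer:
  assumes "x \<in> ball i"
  obtains j where "j \<le> i" "x \<in> layer j"
proof
  let ?j = "LEAST j. x \<in> ball j"
  show "?j \<le> i" using assms by (rule Least_le)
  show "x \<in> layer ?j"
    unfolding layer_def using LeastI[of "\<lambda>j. x \<in> ball j", OF assms] not_less_Least by blast
qed

lemma layer_adjacent:
  assumes "x \<in> layer i" "w \<in> W" "{x, w} \<in> F"
  obtains j where "w \<in> layer j" "j \<le> Suc i" "i \<le> Suc j"
proof -
  have "x \<in> ball i" using assms(1) by (simp add: layer_def)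
  with assms(2,3) have "w \<in> ball (Suc i)" by auto
  then obtain j where j: "j \<le> Suc i" "w \<in> layer j" by (rule ball_imp_layer)
  have "x \<in> ball (Suc j)"
    using j(2) assms(1,3) layer_subset_W by (auto simp: layer_def insert_commute)
  then obtain i' where "i' \<le> Suc j" "x \<in> layer i'" by (rule ball_imp_layer)
  with assms(1) have "i \<le> Suc j" using layer_unique by blast
  with j that show ?thesis by blast
qed

lemma layer_Suc_parent:
  assumes "x \<in> layer (Suc i)"
  shows "\<exists>w\<in>layer i. {w, x} \<in> F"
proof -
  from assms have "x \<in> ball (Suc i)" "x \<notin> ball i" by (auto simp: layer_def)
  then obtain w where w: "w \<in> ball i" "{w, x} \<in> F" by auto
  from w(1) obtain j where j: "j \<le> i" "w \<in> layer j" by (rule ball_imp_layer)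
  have "x \<in> W" using assms layer_subset_W by blast
  with w j(2) obtain j' where "x \<in> layer j'" "j' \<le> Suc j"
    by (auto elim: layer_adjacent)
  with assms j have "j = i" using layer_unique by fastforce
  with j w show ?thesis by blast
qed

definition parent :: "'a \<Rightarrow> 'a" where
  "parent x = (SOME w. \<exists>i. x \<in> layer (Suc i) \<and> w \<in> layer i \<and> {w, x} \<in> F)"

lemma parent_in_layer:
  assumes "x \<in> layer (Suc i)"
  shows "parent x \<in> layer i" "{parent x, x} \<in> F"
proof -
  have "\<exists>i'. x \<in> layer (Suc i') \<and> parent x \<in> layer i' \<and> {parent x, x} \<in> F"
    unfolding parent_def by (rule someI_ex) (use assms layer_Suc_parent in blast)
  then obtain i' where "x \<in> layer (Suc i')" "parent x \<in> layer i'" "{parent x, x} \<in> F" by blast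
  moreover from assms this(1) have "i' = i" using layer_unique by blast
  ultimately show "parent x \<in> layer i" "{parent x, x} \<in> F" by simp_all
qed

lemma ancestor_in_layer: "x \<in> layer i \<Longrightarrow> l \<le> i \<Longrightarrow> (parent ^^ l) x \<in> layer (i - l)"
proof (induction l)
  case (Suc l)
  then have "(parent ^^ l) x \<in> layer (Suc (i - Suc l))" by (simp add: Suc_diff_Suc)
  then show ?case by (simp add: parent_in_layer)
qed simp

lemma ancestor_edge:
  assumes "x \<in> layer i" "l < i"
  shows "{(parent ^^ l) x, (parent ^^ Suc l) x} \<in> F"
proof -
  have "(parent ^^ l) x \<in> layer (Suc (i - Suc l))"
    using ancestor_in_layer[OF assms(1), of l] assms(2) by (simp add: Suc_diff_Suc)
  then show ?thesis using parent_in_layer(2) by (simp add: insert_commute)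
qed

lemma ancestor_root: "x \<in> layer i \<Longrightarrow> (parent ^^ i) x = r"
  using ancestor_in_layer[of x i i] by (simp add: layer_0)

lemma ancestor_eq_mono:
  assumes "(parent ^^ l) x = (parent ^^ l) y" "l \<le> m"
  shows "(parent ^^ m) x = (parent ^^ m) y"
proof -
  from assms(2) have "parent ^^ m = parent ^^ (m - l) \<circ> parent ^^ l"
    by (simp flip: funpow_add)
  with assms(1) show ?thesis by simp
qed

definition meeting_height :: "'a \<Rightarrow> 'a \<Rightarrow> nat" where
  "meeting_height a b = (LEAST s. (parent ^^ s) a = (parent ^^ s) b)"

lemma meeting_height:
  assumes "a \<in> layer i" "b \<in> layer i"
  shows "meeting_height a b \<le> i"
    "(parent ^^ meeting_height a b) a = (parent ^^ meeting_height a b) b"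
proof -
  have "(parent ^^ i) a = (parent ^^ i) b" using assms by (simp add: ancestor_root)
  then show "meeting_height a b \<le> i"
    "(parent ^^ meeting_height a b) a = (parent ^^ meeting_height a b) b"
    unfolding meeting_height_def by (auto intro: Least_le LeastI)
qed

lemma ancestors_differ_below_meeting_height:
  "s < meeting_height a b \<Longrightarrow> (parent ^^ s) a \<noteq> (parent ^^ s) b"
  unfolding meeting_height_def by (rule not_less_Least)

lemma ancestors_eq_above_meeting_height:
  "a \<in> layer i \<Longrightarrow> b \<in> layer i \<Longrightarrow> meeting_height a b \<le> s \<Longrightarrow> (parent ^^ s) a = (parent ^^ s) b"
  using meeting_height(2) ancestor_eq_mono by blast

definition ancestors :: "'a \<Rightarrow> nat \<Rightarrow> 'a list" where
  "ancestors x m = map (\<lambda>l. (parent ^^ l) x) [0..<m]"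

lemma distinct_ancestors:
  assumes "x \<in> layer i" "m \<le> Suc i"
  shows "distinct (ancestors x m)"
  unfolding ancestors_def distinct_map
proof (intro conjI inj_onI)
  fix l l' assume "l \<in> set [0..<m]" "l' \<in> set [0..<m]" "(parent ^^ l) x = (parent ^^ l') x"
  with assms(2) have "l \<le> i" "l' \<le> i" by auto
  with \<open>(parent ^^ l) x = _\<close> have "i - l = i - l'"
    using ancestor_in_layer[OF assms(1)] layer_unique by metis
  with \<open>l \<le> i\<close> \<open>l' \<le> i\<close> show "l = l'" by simp
qed simp

lemma successively_ancestors:
  assumes "x \<in> layer i" "m \<le> Suc i"
  shows "successively (\<lambda>u w. {u, w} \<in> F) (ancestors x m)"
  unfolding ancestors_def successively_conv_nth using assms ancestor_edge by auto

lemma set_ancestors_subset: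
  assumes "x \<in> layer i" "m \<le> Suc i"
  shows "set (ancestors x m) \<subseteq> insert x (\<Union>j<i. layer j)"
proof
  fix y assume "y \<in> set (ancestors x m)"
  then obtain l where "l < m" "y = (parent ^^ l) x" by (auto simp: ancestors_def)
  with assms show "y \<in> insert x (\<Union>j<i. layer j)"
    using ancestor_in_layer[OF assms(1), of l] by (cases l) auto
qed

lemma tree_path:
  assumes "b \<in> layer i" "q \<in> layer i" "1 \<le> s" "s \<le> i"
    and "(parent ^^ s) b = (parent ^^ s) q" "(parent ^^ (s - 1)) b \<noteq> (parent ^^ (s - 1)) q"
  obtains T where "hd T = b" "last T = q" "length T = 2 * s + 1" "distinct T"
    "successively (\<lambda>u w. {u, w} \<in> F) T" "set T \<subseteq> {b, q} \<union> (\<Union>j<i. layer j)"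
proof
  define T where "T = ancestors b (Suc s) @ rev (ancestors q s)"
  show "hd T = b" "last T = q" "length T = 2 * s + 1"
    using assms(3) by (simp_all add: T_def ancestors_def hd_map last_map upt_conv_Cons)
  have disjoint: "set (ancestors b (Suc s)) \<inter> set (ancestors q s) = {}"
  proof (rule ccontr)
    assume "\<not> ?thesis"
    then obtain l m where lm: "l \<le> s" "m < s" "(parent ^^ l) b = (parent ^^ m) q"
      by (auto simp: ancestors_def less_Suc_eq_le simp del: upt_Suc)
    with assms have "i - l = i - m"
      using ancestor_in_layer[OF assms(1), of l] ancestor_in_layer[OF assms(2), of m] layer_unique
      by (metis le_trans less_imp_le_nat)
    with lm assms(4) have "l = m" by simp
    with lm have "(parent ^^ m) b = (parent ^^ m) q" "m \<le> s - 1" by simp_all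
    then show False using assms(6) ancestor_eq_mono by blast
  qed
  show "distinct T"
    using assms disjoint distinct_ancestors by (simp add: T_def)
  have "successively (\<lambda>u w. {u, w} \<in> F) (ancestors b (Suc s))"
    using assms(1,4) by (simp add: successively_ancestors)
  moreover have "successively (\<lambda>u w. {u, w} \<in> F) (rev (ancestors q s))"
    using successively_ancestors[OF assms(2), of s] assms(4) by (simp add: insert_commute)
  moreover have "last (ancestors b (Suc s)) = (parent ^^ s) b"
    by (simp add: ancestors_def)
  moreover have "hd (rev (ancestors q s)) = (parent ^^ (s - 1)) q"
    using assms(3) by (simp add: ancestors_def hd_rev last_map)
  moreover have "{(parent ^^ s) b, (parent ^^ (s - 1)) q} \<in> F"
    using ancestor_edge[OF assms(2), of "s - 1"] assms(3-5) by (simp add: insert_commute)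
  ultimately show "successively (\<lambda>u w. {u, w} \<in> F) T"
    by (simp add: T_def successively_append_iff)
  show "set T \<subseteq> {b, q} \<union> (\<Union>j<i. layer j)"
    using set_ancestors_subset[OF assms(1), of "Suc s"] set_ancestors_subset[OF assms(2), of s]
      assms(4)
    by (auto simp: T_def)
qed

lemma circuit_from_tree_path_and_walk:
  assumes "b \<in> layer i" "1 \<le> s" "s \<le> i"
    and "(parent ^^ s) b = (parent ^^ s) (hd ps)"
      "(parent ^^ (s - 1)) b \<noteq> (parent ^^ (s - 1)) (hd ps)"
    and "ps \<noteq> []" "hd ps \<in> layer i" "set ps \<subseteq> layer i \<union> layer (Suc i)" "b \<notin> set ps"
    and "distinct ps" "successively (\<lambda>u w. {u, w} \<in> F) ps" "{last ps, b} \<in> F"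
  shows "has_circuit_of_length F (2 * s + length ps)"
proof -
  obtain T where T: "hd T = b" "last T = hd ps" "length T = 2 * s + 1" "distinct T"
    "successively (\<lambda>u w. {u, w} \<in> F) T" "set T \<subseteq> {b, hd ps} \<union> (\<Union>j<i. layer j)"
    using tree_path assms(1-5,7) by metis
  have "x \<notin> layer j" if "x \<in> set ps" "j < i" for x j
  proof
    assume "x \<in> layer j"
    moreover have "x \<in> layer i \<union> layer (Suc i)" using that(1) assms(8) by blast
    ultimately have "j = i \<or> j = Suc i" using layer_unique by blast
    with that(2) show False by simp
  qed
  moreover have "hd ps \<in> set T" using T(2,3) last_in_set[of T] by fastforce
  ultimately have "set T \<inter> set ps = {hd ps}" using T(6) assms(6,9) hd_in_set by blast
  moreover have "3 \<le> 2 * s + length ps" using assms(2,6) by (cases ps) auto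
  ultimately show ?thesis
    using T assms(2,10-12) has_circuit_of_length_join[of T ps F] by simp
qed

end

section \<open>Layers of a bipartite graph\<close>

locale bipartite_bfs = bfs +
  fixes X Y :: "'a set"
  assumes edge_between: "\<forall>e\<in>F. \<exists>x\<in>X. \<exists>y\<in>Y. e = {x, y}"
    and disjoint_sides: "X \<inter> Y = {}"
begin

lemma edge_sides: "{u, w} \<in> F \<Longrightarrow> (u \<in> X \<and> w \<in> Y) \<or> (u \<in> Y \<and> w \<in> X)"
  using edge_between by (fastforce simp: doubleton_eq_iff)

lemma card_edges_eq_2: "\<forall>e\<in>F. card e = 2"
  using edge_between disjoint_sides by (rule card_edge_if_between)

lemma layer_side: "x \<in> layer i \<Longrightarrow> x \<in> X \<longleftrightarrow> (r \<in> X \<longleftrightarrow> even i)"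
proof (induction i arbitrary: x)
  case 0
  then show ?case by (simp add: layer_0)
next
  case (Suc i)
  then obtain w where "w \<in> layer i" "{w, x} \<in> F" using layer_Suc_parent by blast
  with Suc.IH edge_sides disjoint_sides show ?case by auto
qed

lemma no_edge_in_layer: "x \<in> layer i \<Longrightarrow> w \<in> layer i \<Longrightarrow> {x, w} \<notin> F"
  using layer_side edge_sides disjoint_sides by blast

lemma nbr_in_next_or_previous_layer:
  assumes "x \<in> layer i" "w \<in> W" "{x, w} \<in> F"
  shows "w \<in> layer (Suc i) \<or> (0 < i \<and> w \<in> layer (i - 1))"
proof -
  obtain j where "w \<in> layer j" "j \<le> Suc i" "i \<le> Suc j" using assms by (rule layer_adjacent)
  moreover have "j \<noteq> i" using calculation(1) assms(1,3) no_edge_in_layer by blast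
  ultimately have "j = Suc i \<or> (0 < i \<and> j = i - 1)" by arith
  with \<open>w \<in> layer j\<close> show ?thesis by blast
qed

lemma nbrs_subset_other_layer:
  "W' \<subseteq> layer i \<union> layer j \<Longrightarrow> x \<in> layer j \<Longrightarrow> nbrs F W' x \<subseteq> layer i"
  using no_edge_in_layer by (fastforce simp: nbrs_def)

lemma finite_subset_layers: "W' \<subseteq> layer i \<union> layer j \<Longrightarrow> finite W'"
  using finite_layer by (meson finite_Un finite_subset)

lemma exists_upper_vertex_with_two_nbrs:
  assumes W': "W' \<subseteq> layer i \<union> layer (Suc i)" "W' \<noteq> {}"
    and deg: "\<forall>x\<in>W'. 2 \<le> card (nbrs F W' x)"
  obtains y a b where "y \<in> W' \<inter> layer (Suc i)" "a \<in> nbrs F W' y" "b \<in> nbrs F W' y" "a \<noteq> b"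
proof -
  have two_nbrs: "\<exists>a\<in>nbrs F W' x. \<exists>b\<in>nbrs F W' x. a \<noteq> b" if "x \<in> W'" for x
  proof -
    have "\<not> card (nbrs F W' x) \<le> Suc 0" using deg that by fastforce
    then show ?thesis
      using card_le_Suc0_iff_eq[OF finite_nbrs[OF finite_subset_layers[OF W'(1)]]] by blast
  qed
  obtain x where x: "x \<in> W'" using W'(2) by blast
  have "\<exists>y\<in>W' \<inter> layer (Suc i). \<exists>a\<in>nbrs F W' y. \<exists>b\<in>nbrs F W' y. a \<noteq> b"
  proof (cases "x \<in> layer (Suc i)")
    case False
    with x W'(1) have "nbrs F W' x \<subseteq> layer (Suc i)"
      using nbrs_subset_other_layer[of W' "Suc i" i x] by blast
    with two_nbrs[OF x] obtain y where "y \<in> W' \<inter> layer (Suc i)" "{x, y} \<in> F"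
      by (auto simp: nbrs_def)
    with two_nbrs show ?thesis by blast
  qed (use x two_nbrs in blast)
  with that show ?thesis by blast
qed

text \<open>The choice of Bondy and Simonovits: \<open>s\<close> is the largest height at which the ancestors of
  two neighbours of an upper vertex meet.\<close>
lemma common_ancestor_level:
  assumes W': "W' \<subseteq> layer i \<union> layer (Suc i)" "W' \<noteq> {}"
    and deg: "\<forall>x\<in>W'. 2 \<le> card (nbrs F W' x)"
  obtains s y a b where "y \<in> W' \<inter> layer (Suc i)" "a \<in> nbrs F W' y" "b \<in> nbrs F W' y"
    "1 \<le> s" "s \<le> i" "(parent ^^ s) a = (parent ^^ s) b"
    "(parent ^^ (s - 1)) a \<noteq> (parent ^^ (s - 1)) b"
    "\<forall>y'\<in>W' \<inter> layer (Suc i). \<forall>q\<in>nbrs F W' y'. \<forall>q'\<in>nbrs F W' y'. (parent ^^ s) q = (parent ^^ s) q'"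
proof -
  have lower: "nbrs F W' y \<subseteq> layer i" if "y \<in> layer (Suc i)" for y
    using nbrs_subset_other_layer[OF W'(1) that] .
  define M where "M = {meeting_height a b |y a b.
    y \<in> W' \<inter> layer (Suc i) \<and> a \<in> nbrs F W' y \<and> b \<in> nbrs F W' y}"
  have "M \<subseteq> {..i}"
  proof
    fix m assume "m \<in> M"
    then obtain y a b where "y \<in> layer (Suc i)" "a \<in> nbrs F W' y" "b \<in> nbrs F W' y"
      "m = meeting_height a b" by (auto simp: M_def)
    with lower meeting_height(1)[of a i b] show "m \<in> {..i}" by auto
  qed
  then have "finite M" by (rule finite_subset) simp
  obtain y0 a0 b0 where ab0: "y0 \<in> W' \<inter> layer (Suc i)" "a0 \<in> nbrs F W' y0" "b0 \<in> nbrs F W' y0"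
    "a0 \<noteq> b0" using W' deg by (rule exists_upper_vertex_with_two_nbrs)
  then have "meeting_height a0 b0 \<in> M" by (auto simp: M_def)
  have "a0 \<in> layer i" "b0 \<in> layer i" using lower ab0 by blast+
  have "meeting_height a0 b0 \<noteq> 0"
  proof
    assume "meeting_height a0 b0 = 0"
    with meeting_height(2)[OF \<open>a0 \<in> layer i\<close> \<open>b0 \<in> layer i\<close>] have "a0 = b0" by simp
    with ab0(4) show False ..
  qed
  define s where "s = Max M"
  have "s \<in> M" using \<open>finite M\<close> \<open>meeting_height a0 b0 \<in> M\<close> unfolding s_def by (intro Max_in) auto
  have "meeting_height a0 b0 \<le> s"
    using \<open>finite M\<close> \<open>meeting_height a0 b0 \<in> M\<close> unfolding s_def by (rule Max_ge)
  with \<open>meeting_height a0 b0 \<noteq> 0\<close> have "1 \<le> s" by simp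
  from \<open>s \<in> M\<close> obtain y a b where y: "y \<in> W' \<inter> layer (Suc i)" "a \<in> nbrs F W' y" "b \<in> nbrs F W' y"
    and s: "s = meeting_height a b" by (auto simp: M_def)
  with lower meeting_height have "s \<le> i" "(parent ^^ s) a = (parent ^^ s) b" by blast+
  moreover have "(parent ^^ (s - 1)) a \<noteq> (parent ^^ (s - 1)) b"
    using s \<open>1 \<le> s\<close> by (intro ancestors_differ_below_meeting_height) simp
  moreover have "(parent ^^ s) q = (parent ^^ s) q'"
    if "y' \<in> W' \<inter> layer (Suc i)" "q \<in> nbrs F W' y'" "q' \<in> nbrs F W' y'" for y' q q'
  proof (rule ancestors_eq_above_meeting_height)
    show "q \<in> layer i" "q' \<in> layer i" using that lower by blast+
    have "meeting_height q q' \<in> M" using that by (auto simp: M_def)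
    then show "meeting_height q q' \<le> s" using \<open>finite M\<close> by (simp add: s_def)
  qed
  ultimately show ?thesis using that y \<open>1 \<le> s\<close> by blast
qed

lemma walk_parity:
  assumes "set ps \<subseteq> layer i \<union> layer (Suc i)" "successively (\<lambda>u w. {u, w} \<in> F) ps"
    and "ps \<noteq> []" "last ps \<in> layer (Suc i)"
  shows "hd ps \<in> layer i \<longleftrightarrow> even (length ps)"
  using assms
proof (induction ps)
  case (Cons x ps)
  show ?case
  proof (cases "ps = []")
    case True
    with Cons.prems show ?thesis using layer_unique by fastforce
  next
    case False
    with Cons have IH: "hd ps \<in> layer i \<longleftrightarrow> even (length ps)"
      by (simp add: successively_Cons)
    from False Cons.prems(2) have "{x, hd ps} \<in> F"
      by (cases ps) (simp_all add: successively_Cons)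
    moreover have "x \<in> layer i \<union> layer (Suc i)" "hd ps \<in> layer i \<union> layer (Suc i)"
      using Cons.prems(1) hd_in_set[OF False] by auto
    ultimately have "x \<in> layer i \<longleftrightarrow> hd ps \<notin> layer i"
      using no_edge_in_layer layer_unique by (metis Un_iff insert_commute n_not_Suc_n)
    with IH show ?thesis by simp
  qed
qed simp

lemma walk_common_ancestor:
  assumes W': "W' \<subseteq> layer i \<union> layer (Suc i)"
    and same: "\<forall>y\<in>W' \<inter> layer (Suc i). \<forall>q\<in>nbrs F W' y. \<forall>q'\<in>nbrs F W' y.
      (parent ^^ s) q = (parent ^^ s) q'"
    and walk: "set ps \<subseteq> W'" "successively (\<lambda>u w. {u, w} \<in> F) ps" "ps \<noteq> []"
      "last ps \<in> layer (Suc i)" "a \<in> nbrs F W' (last ps)"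
    and "hd ps \<in> layer i"
  shows "(parent ^^ s) (hd ps) = (parent ^^ s) a"
proof -
  let ?z = "(parent ^^ s) a"
  define good where "good x \<longleftrightarrow> (x \<in> layer i \<longrightarrow> (parent ^^ s) x = ?z)
      \<and> (x \<in> layer (Suc i) \<longrightarrow> (\<forall>q\<in>nbrs F W' x. (parent ^^ s) q = ?z))" for x
  have W'': "W' \<subseteq> layer (Suc i) \<union> layer i" using W' by blast
  have "good (hd ps)"
  proof (rule successively_backward_invariant[OF walk(2,3,1)])
    have "last ps \<in> W'" "last ps \<notin> layer i"
      using walk(1,3,4) layer_unique[of "last ps" "Suc i" i] by auto
    with same walk(4,5) show "good (last ps)" unfolding good_def by blast
  next
    fix x x' assume x: "x \<in> W'" "x' \<in> W'" "{x, x'} \<in> F" "good x'"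
    then have nbr: "x \<in> nbrs F W' x'" "x' \<in> nbrs F W' x"
      by (auto simp: nbrs_def insert_commute)
    consider "x \<in> layer i" | "x \<in> layer (Suc i)" using W' x(1) by blast
    then show "good x"
    proof cases
      case 1
      with nbr(2) have "x' \<in> layer (Suc i)" using nbrs_subset_other_layer[OF W''] by blast
      moreover have "x \<notin> layer (Suc i)" using layer_unique[OF 1, of "Suc i"] by auto
      ultimately show ?thesis using nbr(1) x(4) by (simp add: good_def)
    next
      case 2
      with nbr(2) have "x' \<in> layer i" using nbrs_subset_other_layer[OF W'] by blast
      with x(4) have "(parent ^^ s) x' = ?z" by (simp add: good_def)
      moreover have "\<forall>q\<in>nbrs F W' x. (parent ^^ s) q = (parent ^^ s) x'"
        using same 2 x(1) nbr(2) by blast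
      moreover have "x \<notin> layer i" using layer_unique[OF 2, of i] by auto
      ultimately show ?thesis by (simp add: good_def)
    qed
  qed
  with \<open>hd ps \<in> layer i\<close> show ?thesis by (simp add: good_def)
qed

text \<open>A path in \<open>W'\<close> of odd length \<open>2 (k - s) - 1\<close> from the upper vertex \<open>y\<close>, avoiding its
  two neighbours \<open>a, b\<close>, ends at a lower vertex with the common ancestor at height \<open>s\<close>; the
  tree path from it to \<open>a\<close> or \<open>b\<close> (whichever branches off below \<open>s\<close>) closes a circuit of
  length \<open>2 k\<close>.\<close>
lemma no_min_degree_subgraph_in_layer_pair:
  assumes noc: "\<not> has_circuit_of_length F (2 * k)" and "i < k"
    and W': "W' \<subseteq> layer i \<union> layer (Suc i)" "W' \<noteq> {}"
    and deg: "\<forall>x\<in>W'. 2 * k \<le> card (nbrs F W' x)"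
  shows False
proof -
  from deg \<open>i < k\<close> have "\<forall>x\<in>W'. 2 \<le> card (nbrs F W' x)" by fastforce
  then obtain s y a b where y: "y \<in> W' \<inter> layer (Suc i)" and ab: "a \<in> nbrs F W' y" "b \<in> nbrs F W' y"
    and s: "1 \<le> s" "s \<le> i" "(parent ^^ s) a = (parent ^^ s) b"
      "(parent ^^ (s - 1)) a \<noteq> (parent ^^ (s - 1)) b"
    and same: "\<forall>y'\<in>W' \<inter> layer (Suc i). \<forall>q\<in>nbrs F W' y'. \<forall>q'\<in>nbrs F W' y'.
      (parent ^^ s) q = (parent ^^ s) q'"
    by (rule common_ancestor_level[OF W'])
  have ab_layer: "a \<in> layer i" "b \<in> layer i"
    using ab y nbrs_subset_other_layer[OF W'(1)] by blast+
  then have y_start: "y \<in> W' - {a, b}" using y layer_unique[of y "Suc i" i] by auto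
  have "card {a, b} \<le> 2" by (cases "a = b") auto
  with s(1,2) \<open>i < k\<close> have room: "2 * (k - s) - 1 + card {a, b} \<le> 2 * k" by arith
  obtain ps where ps: "length ps = Suc (2 * (k - s) - 1)" "last ps = y" "distinct ps"
    "set ps \<subseteq> W' - {a, b}" "successively (\<lambda>u w. {u, w} \<in> F) ps"
    by (rule exists_path_avoiding[OF finite_subset_layers[OF W'(1)] card_edges_eq_2 deg y_start _ room])
      simp
  have len: "length ps = 2 * (k - s)" and "ps \<noteq> []" using ps(1) s(2) \<open>i < k\<close> by auto
  have q: "hd ps \<in> layer i"
    using walk_parity[of ps i] ps(2,4,5) W'(1) y len \<open>ps \<noteq> []\<close> by auto
  have "(parent ^^ s) (hd ps) = (parent ^^ s) a"
    using walk_common_ancestor[OF W'(1) same] ps y ab(1) q \<open>ps \<noteq> []\<close> by auto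
  moreover define b' where
    "b' = (if (parent ^^ (s - 1)) a = (parent ^^ (s - 1)) (hd ps) then b else a)"
  ultimately have b': "b' \<in> {a, b}" "(parent ^^ s) b' = (parent ^^ s) (hd ps)"
    "(parent ^^ (s - 1)) b' \<noteq> (parent ^^ (s - 1)) (hd ps)"
    using s(3,4) by auto
  have "b' \<in> layer i" "b' \<notin> set ps" "{last ps, b'} \<in> F"
    using b'(1) ab_layer ab ps(2,4) by (auto simp: nbrs_def insert_commute)
  then have "has_circuit_of_length F (2 * s + length ps)"
    using circuit_from_tree_path_and_walk b'(2,3) s(1,2) \<open>ps \<noteq> []\<close> q ps(3,4,5) W'(1) by blast
  moreover have "2 * s + length ps = 2 * k" using len s(2) \<open>i < k\<close> by simp
  ultimately have "has_circuit_of_length F (2 * k)" by simp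
  with noc show False ..
qed

end

section \<open>Growth of the layers\<close>

text \<open>From \<open>x (i + 1) \<ge> g x i - x (i - 1)\<close> and \<open>x i \<ge> x (i - 1)\<close> one gets
  \<open>x (i + 1) \<ge> (g - 1) x i\<close>, so the ratio of consecutive terms stays at least \<open>g - 1\<close>.\<close>
lemma power_le_of_recurrence:
  fixes x :: "nat \<Rightarrow> real"
  assumes g: "2 \<le> g" and x0: "x 0 = 1" and x1: "g - 1 \<le> x 1"
    and rec: "\<And>i. 1 \<le> i \<Longrightarrow> i < k \<Longrightarrow> g * x i - x (i - 1) \<le> x (Suc i)"
    and nonneg: "\<And>i. 0 \<le> x i"
  shows "(g - 1) ^ k \<le> x k"
proof -
  have ratio: "(g - 1) * x (i - 1) \<le> x i" if "1 \<le> i" "i \<le> k" for i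
    using that
  proof (induction i rule: nat_induct_at_least)
    case (Suc i)
    have "x (i - 1) \<le> (g - 1) * x (i - 1)"
      using g nonneg[of "i - 1"] by (simp add: mult_le_cancel_right1)
    also have "\<dots> \<le> x i" using Suc by simp
    finally show ?case using rec[of i] Suc by (simp add: algebra_simps)
  qed (use x0 x1 in simp)
  have "(g - 1) ^ i \<le> x i" if "i \<le> k" for i
    using that
  proof (induction i)
    case (Suc i)
    then have "(g - 1) * (g - 1) ^ i \<le> (g - 1) * x i" using g by (simp add: mult_left_mono)
    also have "\<dots> \<le> x (Suc i)" using ratio[of "Suc i"] Suc.prems by simp
    finally show ?case by simp
  qed (simp add: x0)
  then show ?thesis by simp
qed

context bipartite_bfs
begin

lemma card_edges_in_layer_pair_le:
  assumes "\<not> has_circuit_of_length F (2 * k)" "i < k"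
  shows "card (edges_in F (layer i \<union> layer (Suc i)))
    \<le> (2 * k - 1) * (card (layer i) + card (layer (Suc i)))"
proof (rule ccontr)
  have "card (layer i \<union> layer (Suc i)) = card (layer i) + card (layer (Suc i))"
    using layer_disjoint[of i "Suc i"] by (simp add: card_Un_disjoint finite_layer)
  moreover assume "\<not> ?thesis"
  ultimately have "(2 * k - 1) * card (layer i \<union> layer (Suc i))
      < card (edges_in F (layer i \<union> layer (Suc i)))" by simp
  then obtain W' where "W' \<subseteq> layer i \<union> layer (Suc i)" "W' \<noteq> {}"
    "\<forall>x\<in>W'. 2 * k \<le> card (nbrs F W' x)"
    by (rule exists_min_degree_subgraph[OF finite_subset_layers[OF subset_refl] card_edges_eq_2])
  with assms show False by (rule no_min_degree_subgraph_in_layer_pair)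
qed

lemma layer_growth:
  assumes "\<not> has_circuit_of_length F (2 * k)" "\<forall>x\<in>W. d \<le> card (nbrs F W x)" "1 \<le> i" "i < k"
  shows "d * card (layer i)
    \<le> (2 * k - 1) * (card (layer (i - 1)) + 2 * card (layer i) + card (layer (Suc i)))"
proof -
  let ?up = "\<lambda>x. nbrs F (layer (Suc i)) x" and ?down = "\<lambda>x. nbrs F (layer (i - 1)) x"
  have "d \<le> card (?down x) + card (?up x)" if x: "x \<in> layer i" for x
  proof -
    have "nbrs F W x \<subseteq> ?down x \<union> ?up x"
      using nbr_in_next_or_previous_layer[OF x] by (auto simp: nbrs_def)
    then have "card (nbrs F W x) \<le> card (?down x \<union> ?up x)"
      by (intro card_mono) (simp_all add: finite_nbrs finite_layer)
    also have "\<dots> \<le> card (?down x) + card (?up x)" by (rule card_Un_le)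
    finally show ?thesis using assms(2) x layer_subset_W by force
  qed
  then have "(\<Sum>x\<in>layer i. d) \<le> (\<Sum>x\<in>layer i. card (?down x) + card (?up x))"
    by (rule sum_mono)
  then have "d * card (layer i) \<le> (\<Sum>x\<in>layer i. card (?down x) + card (?up x))"
    by (simp add: mult.commute)
  also have "\<dots> = card (Sigma (layer i) ?down) + card (Sigma (layer i) ?up)"
    by (simp add: sum.distrib finite_layer finite_nbrs)
  also have "\<dots> \<le> card (edges_in F (layer i \<union> layer (i - 1)))
      + card (edges_in F (layer i \<union> layer (Suc i)))"
    using card_Sigma_nbrs_le_edges_in[of "layer i"] layer_disjoint assms(3)
    by (intro add_mono) (simp_all add: finite_layer)
  also have "layer i \<union> layer (i - 1) = layer (i - 1) \<union> layer (Suc (i - 1))"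
    using assms(3) by auto
  also have "card (edges_in F (layer (i - 1) \<union> layer (Suc (i - 1))))
      + card (edges_in F (layer i \<union> layer (Suc i)))
    \<le> (2 * k - 1) * (card (layer (i - 1)) + card (layer (Suc (i - 1))))
      + (2 * k - 1) * (card (layer i) + card (layer (Suc i)))"
    using card_edges_in_layer_pair_le[OF assms(1)] assms(4) by (intro add_mono) simp_all
  finally show ?thesis using assms(3) by (simp add: distrib_left[symmetric] add_ac mult_2)
qed

lemma min_degree_le_card_layer_1:
  assumes "\<forall>x\<in>W. d \<le> card (nbrs F W x)"
  shows "d \<le> card (layer 1)"
proof -
  have "nbrs F W r \<subseteq> layer 1"
    using nbr_in_next_or_previous_layer[of r 0] by (auto simp: nbrs_def layer_0)
  then have "card (nbrs F W r) \<le> card (layer 1)" by (intro card_mono finite_layer)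
  with assms root_in_W show ?thesis by force
qed

lemma card_layer_ge_power:
  assumes noc: "\<not> has_circuit_of_length F (2 * k)" and "1 \<le> k"
    and deg: "\<forall>x\<in>W. d \<le> card (nbrs F W x)" and "4 * real (2 * k - 1) \<le> real d"
  shows "(real d / real (2 * k - 1) - 3) ^ k \<le> real (card (layer k))"
proof -
  define K where "K = real (2 * k - 1)"
  define g where "g = real d / K - 2"
  define x where "x i = real (card (layer i))" for i
  have K: "1 \<le> K" using \<open>1 \<le> k\<close> by (simp add: K_def)
  have "4 * K \<le> real d" unfolding K_def using assms(4) .
  with K have "4 \<le> real d / K" by (simp add: le_divide_eq)
  have "(g - 1) ^ k \<le> x k"
  proof (rule power_le_of_recurrence)
    show "2 \<le> g" "x 0 = 1" "0 \<le> x i" for i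
      using \<open>4 \<le> real d / K\<close> by (simp_all add: x_def layer_0 g_def)
    have "real d / K \<le> real d" using K by (simp add: divide_le_eq mult_le_cancel_left1)
    then show "g - 1 \<le> x 1"
      using min_degree_le_card_layer_1[OF deg] by (simp add: g_def x_def)
    show "g * x i - x (i - 1) \<le> x (Suc i)" if "1 \<le> i" "i < k" for i
    proof -
      have "real (d * card (layer i)) \<le> real ((2 * k - 1)
          * (card (layer (i - 1)) + 2 * card (layer i) + card (layer (Suc i))))"
        using layer_growth[OF noc deg that] by (simp only: of_nat_le_iff)
      then have "real d * x i \<le> K * (x (i - 1) + 2 * x i + x (Suc i))"
        by (simp add: K_def x_def)
      then have "real d / K * x i \<le> x (i - 1) + 2 * x i + x (Suc i)"
        using K by (simp add: field_simps)
      then show ?thesis by (simp add: g_def algebra_simps)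
    qed
  qed
  then show ?thesis by (simp add: g_def K_def x_def)
qed

lemma min_degree_le:
  assumes noc: "\<not> has_circuit_of_length F (2 * k)" and "2 \<le> k"
    and deg: "\<forall>x\<in>W. d \<le> card (nbrs F W x)" and root_side: "r \<in> X \<longleftrightarrow> even k"
    and "finite X"
  shows "real d \<le> real (2 * k - 1) * (real (card X) powr (1 / real k) + 3)"
proof (cases "d = 0")
  case False
  define K where "K = real (2 * k - 1)"
  define P where "P = real (card X) powr (1 / real k)"
  have K: "1 \<le> K" using \<open>2 \<le> k\<close> by (simp add: K_def)
  obtain w where "{r, w} \<in> F"
    using deg root_in_W False by (fastforce simp: nbrs_def)
  then have "X \<noteq> {}" using edge_sides by blast
  then have P: "1 \<le> P" unfolding P_def using \<open>finite X\<close>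
    by (intro ge_one_powr_ge_zero) (simp_all add: Suc_le_eq card_gt_0_iff)
  have "real d \<le> K * (P + 3)"
  proof (cases "4 * K \<le> real d")
    case False
    then have "real d < K * 4" by simp
    also have "\<dots> \<le> K * (P + 3)" using K P by (intro mult_left_mono) simp_all
    finally show ?thesis by simp
  next
    case True
    have "layer k \<subseteq> X" using layer_side root_side by blast
    then have "(real d / K - 3) ^ k \<le> real (card X)"
      using card_layer_ge_power[OF noc _ deg] True \<open>2 \<le> k\<close> \<open>finite X\<close> card_mono[of X "layer k"]
      by (fastforce simp: K_def)
    moreover have "0 \<le> real d / K - 3" using True K by (simp add: le_divide_eq)
    ultimately have "real d / K - 3 \<le> root k (card X)"
      using \<open>2 \<le> k\<close> real_root_le_mono[of k "(real d / K - 3) ^ k"]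
      by (simp add: real_root_power_cancel)
    then have "real d / K - 3 \<le> P" using \<open>2 \<le> k\<close> by (simp add: P_def root_powr_inverse)
    then show ?thesis using K by (simp add: divide_le_eq algebra_simps)
  qed
  then show ?thesis by (simp add: K_def P_def)
qed (auto intro!: mult_nonneg_nonneg)

end

section \<open>Edge bounds\<close>

lemma bipartite_card_edges_le:
  assumes "finite V" "X \<union> Y = V" "X \<inter> Y = {}" "\<forall>e\<in>E. \<exists>x\<in>X. \<exists>y\<in>Y. e = {x, y}"
    and noc: "\<not> has_circuit_of_length E (2 * k)" and "2 \<le> k"
  shows "real (card E) \<le> real (2 * k - 1) * (real (card X) powr (1 / real k) + 3) * real (card V)"
proof (rule ccontr)
  define K where "K = real (2 * k - 1) * (real (card X) powr (1 / real k) + 3)"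
  define d where "d = nat \<lfloor>K\<rfloor> + 1"
  have "0 \<le> K" by (simp add: K_def)
  then have "real (nat \<lfloor>K\<rfloor>) = of_int \<lfloor>K\<rfloor>" by simp
  then have "K < real d" "real (d - 1) \<le> K"
    using real_of_int_floor_add_one_gt[of K] of_int_floor_le[of K] unfolding d_def
    by (simp_all, linarith)
  assume "\<not> ?thesis"
  then have "K * real (card V) < real (card E)" by (simp add: K_def)
  moreover have "real (d - 1) * real (card V) \<le> K * real (card V)"
    using \<open>real (d - 1) \<le> K\<close> by (rule mult_right_mono) simp
  ultimately have "real ((d - 1) * card V) < real (card E)" by simp
  moreover have "edges_in E V = E" using assms(2,4) by (auto simp: edges_in_def)
  ultimately have dense: "(d - 1) * card V < card (edges_in E V)" by (simp only: of_nat_less_iff)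
  obtain W where W: "W \<subseteq> V" "W \<noteq> {}" "\<forall>x\<in>W. d \<le> card (nbrs E W x)"
    by (rule exists_min_degree_subgraph[OF assms(1) card_edge_if_between[OF assms(4,3)] dense])
  obtain r where "r \<in> W" "r \<in> X \<longleftrightarrow> even k"
  proof -
    obtain w where "w \<in> W" using W(2) by blast
    moreover have "nbrs E W w \<noteq> {}" using W(3) \<open>w \<in> W\<close> by (fastforce simp: d_def)
    then obtain w' where "w' \<in> W" "{w, w'} \<in> E" by (auto simp: nbrs_def)
    moreover from this(2) assms(3,4) have "w \<in> X \<longleftrightarrow> w' \<notin> X"
      by (fastforce simp: doubleton_eq_iff)
    ultimately show ?thesis using that by metis
  qed
  then interpret bipartite_bfs E W r X Y
    using W(1) assms(1-4) by unfold_locales (auto intro: finite_subset)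
  have "finite X" using assms(1,2) finite_Un by blast
  then have "real d \<le> K"
    unfolding K_def using min_degree_le[OF noc \<open>2 \<le> k\<close> W(3) \<open>r \<in> X \<longleftrightarrow> even k\<close>] by simp
  with \<open>K < real d\<close> show False by simp
qed

lemma bipartite_card_edges_le_coarse:
  assumes "finite V" "X \<union> Y = V" "X \<inter> Y = {}" "\<forall>e\<in>E. \<exists>x\<in>X. \<exists>y\<in>Y. e = {x, y}"
    and "\<not> has_circuit_of_length E (2 * k)" "2 \<le> k"
  shows "real (card E) \<le> 8 * real k * real (card X) powr (1 / real k) * real (card V)"
proof (cases "X = {}")
  case True
  with assms(4) have "E = {}" by blast
  then show ?thesis by simp
next
  case False
  define P where "P = real (card X) powr (1 / real k)"
  have "1 \<le> P" unfolding P_def using False assms(1,2)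
    by (intro ge_one_powr_ge_zero) (auto simp: Suc_le_eq card_gt_0_iff)
  have "real (card E) \<le> real (2 * k - 1) * (P + 3) * real (card V)"
    using bipartite_card_edges_le[OF assms] by (simp add: P_def)
  also have "\<dots> \<le> (2 * real k) * (4 * P) * real (card V)"
    using \<open>1 \<le> P\<close> \<open>2 \<le> k\<close> by (intro mult_right_mono mult_mono) simp_all
  finally show ?thesis by (simp add: P_def)
qed

lemma no_circuit_card_edges_le:
  assumes "simple_graph V E" "\<not> has_circuit_of_length E (2 * k)" "2 \<le> k"
  shows "real (card E) \<le> 16 * real k * real (card V) powr (1 + 1 / real k)"
proof -
  have V: "finite V" "\<forall>e\<in>E. e \<subseteq> V \<and> card e = 2" using assms(1) by (auto simp: simple_graph_def)
  then obtain A where A: "A \<subseteq> V" "card E \<le> 2 * card (cut_edges E A)"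
    using exists_cut_with_half_of_edges[OF V] by blast
  have between: "\<forall>e\<in>cut_edges E A. \<exists>x\<in>A. \<exists>y\<in>V - A. e = {x, y}"
    using V(2) cut_edges_subset by (blast intro: cut_edge_between)
  have noc: "\<not> has_circuit_of_length (cut_edges E A) (2 * k)"
    using assms(2) has_circuit_of_length_mono[OF _ cut_edges_subset] by blast
  have part: "A \<union> (V - A) = V" "A \<inter> (V - A) = {}" using A(1) by auto
  have "real (card (cut_edges E A))
      \<le> 8 * real k * real (card A) powr (1 / real k) * real (card V)"
    using bipartite_card_edges_le_coarse[OF V(1) part between noc assms(3)] .
  also have "\<dots> \<le> 8 * real k * real (card V) powr (1 / real k) * real (card V)"
    using A(1) V(1) by (intro mult_right_mono mult_left_mono powr_mono2) (simp_all add: card_mono)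
  finally show ?thesis
    using A(2) by (simp add: powr_add mult_ac)
qed

lemma bipartition_card_edges_le:
  assumes "bipartition V E A B" "finite V" "\<not> has_circuit_of_length E (2 * k)" "2 \<le> k"
  shows "real (card E) \<le> 16 * real k * real (min (card A) (card B)) powr (1 / real k)
    * real (max (card A) (card B))"
proof -
  have bound: "real (card E) \<le> 16 * real k * real (card X) powr (1 / real k) * real (card Y)"
    if "X \<union> Y = V" "X \<inter> Y = {}" "\<forall>e\<in>E. \<exists>x\<in>X. \<exists>y\<in>Y. e = {x, y}" "card X \<le> card Y" for X Y
  proof -
    have "finite X" "finite Y" using that(1) assms(2) by auto
    with that(1,2) have "card V = card X + card Y" by (metis card_Un_disjoint)
    with that(4) have "real (card V) \<le> 2 * real (card Y)" by simp
    then have "8 * real k * real (card X) powr (1 / real k) * real (card V)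
        \<le> 8 * real k * real (card X) powr (1 / real k) * (2 * real (card Y))"
      by (intro mult_left_mono) simp_all
    with bipartite_card_edges_le_coarse[OF assms(2) that(1-3) assms(3,4)] show ?thesis
      by (simp add: mult_ac)
  qed
  have AB: "A \<union> B = V" "A \<inter> B = {}" "\<forall>e\<in>E. \<exists>x\<in>A. \<exists>y\<in>B. e = {x, y}"
    using assms(1) by (auto simp: bipartition_def)
  then have BA: "B \<union> A = V" "B \<inter> A = {}" "\<forall>e\<in>E. \<exists>x\<in>B. \<exists>y\<in>A. e = {x, y}"
    by (auto simp: insert_commute) (metis insert_commute)
  show ?thesis
    using bound[OF AB] bound[OF BA] by (cases "card A \<le> card B") (simp_all add: min_def max_def)
qed

lemma linear_le_pi_squared:
  assumes "1 \<le> k"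
  shows "16 * real k \<le> 9 * pi\<^sup>2 * (real (2 * k))\<^sup>2"
proof -
  have "16 * real k \<le> 36 * 4 * (real k)\<^sup>2"
    using assms by (simp add: power2_eq_square)
  also have "\<dots> \<le> 36 * pi\<^sup>2 * (real k)\<^sup>2"
    using pi_ge_two power_mono[of 2 pi 2] by (intro mult_right_mono mult_left_mono) simp_all
  finally show ?thesis by (simp add: power2_eq_square)
qed

theorem theorem5p1:
  fixes V :: "'a set" and E :: "'a set set" and p :: nat
  assumes "p \<ge> 4" and "even p"
    and "simple_graph V E" and "V \<noteq> {}"
    and "\<not> has_circuit_of_length E p"
  shows "real (card E) \<le> 18 * pi\<^sup>2 * (real p)\<^sup>2 * real (card V) powr (1 + 2 / real p)
         \<and> (\<forall>A B. bipartition V E A B \<longrightarrow>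
              real (card E) \<le> 9 * pi\<^sup>2 * (real p)\<^sup>2
                 * real (min (card A) (card B)) powr (2 / real p)
                 * real (max (card A) (card B)))"
proof -
  obtain k where p: "p = 2 * k" using \<open>even p\<close> by blast
  with assms(1,5) have k: "2 \<le> k" "\<not> has_circuit_of_length E (2 * k)" by auto
  have "finite V" using assms(3) by (simp add: simple_graph_def)
  have C: "16 * real k \<le> 9 * pi\<^sup>2 * (real p)\<^sup>2"
    unfolding p using k(1) by (intro linear_le_pi_squared) simp
  have exp: "2 / real p = 1 / real k" by (simp add: p)
  have "real (card E) \<le> 16 * real k * real (card V) powr (1 + 2 / real p)"
    using no_circuit_card_edges_le[OF assms(3) k(2,1)] unfolding exp .
  also have "\<dots> \<le> 18 * pi\<^sup>2 * (real p)\<^sup>2 * real (card V) powr (1 + 2 / real p)"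
    using C by (intro mult_right_mono) simp_all
  finally have "real (card E) \<le> 18 * pi\<^sup>2 * (real p)\<^sup>2 * real (card V) powr (1 + 2 / real p)" .
  moreover have "real (card E) \<le> 9 * pi\<^sup>2 * (real p)\<^sup>2
      * real (min (card A) (card B)) powr (2 / real p) * real (max (card A) (card B))"
    if "bipartition V E A B" for A B
    using bipartition_card_edges_le[OF that \<open>finite V\<close> k(2,1)]
      mult_right_mono[OF C,
        of "real (min (card A) (card B)) powr (1 / real k) * real (max (card A) (card B))"]
    unfolding exp by (simp add: mult_ac)
  ultimately show ?thesis by blast
qed

end
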